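(* Assume in addition that $f$ is continuously differentiable on $\Theta$. Then there exists $\varepsilon>0$ such that every maximizer $s^*$ of $R_0(s)=\int_0^{\bar\theta}J(\theta)s(\theta)\,dF(\theta)$ over $\mathcal S(0)$ satisfies $s^*(\theta)=F(\theta)$ for almost every $\theta\in[\bar\theta-\varepsilon,\bar\theta]$ (the highest types are fully separated).
   Context: Let $0<\bar\theta<\infty$, $\Theta=[0,\bar\theta]$, $F$ a cdf on $\Theta$ with continuous, strictly positive density $f$, $dF=f\,d\theta$, and $J(\theta)=\theta-\frac{1-F(\theta)}{f(\theta)}$. For bounded measurable $a,b$ on $\Theta$, write $b\in\mathrm{MPS}(a)$ if $\int_x^{\bar\theta}b\,dF\le\int_x^{\bar\theta}a\,dF$ for all $x\in\Theta$, with equality at $x=0$. $\mathcal S(0)$ is the set of nondecreasing $s:\Theta\to[0,1]$ with $s\in\mathrm{MPS}(F)$. *)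

theory Defs
  imports "HOL-Analysis.Analysis"
begin

text \<open>Theta = {0..tb}; dF = f d(theta). Integrals are Lebesgue integrals w.r.t. lborel.\<close>

definition virt_val :: "(real \<Rightarrow> real) \<Rightarrow> (real \<Rightarrow> real) \<Rightarrow> real \<Rightarrow> real" where
  "virt_val F f \<theta> = \<theta> - (1 - F \<theta>) / f \<theta>"

definition in_MPS :: "real \<Rightarrow> (real \<Rightarrow> real) \<Rightarrow> (real \<Rightarrow> real) \<Rightarrow> (real \<Rightarrow> real) \<Rightarrow> bool" where
  "in_MPS tb f b a \<longleftrightarrow>
     bounded (b ` {0..tb}) \<and> bounded (a ` {0..tb}) \<and>
     set_borel_measurable lborel {0..tb} b \<and> set_borel_measurable lborel {0..tb} a \<and>
     (\<forall>x\<in>{0..tb}. (LINT t:{x..tb}|lborel. b t * f t) \<le> (LINT t:{x..tb}|lborel. a t * f t)) \<and>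
     (LINT t:{0..tb}|lborel. b t * f t) = (LINT t:{0..tb}|lborel. a t * f t)"

definition S0 :: "real \<Rightarrow> (real \<Rightarrow> real) \<Rightarrow> (real \<Rightarrow> real) \<Rightarrow> (real \<Rightarrow> real) set" where
  "S0 tb f F = {s. mono_on {0..tb} s \<and> (\<forall>\<theta>\<in>{0..tb}. s \<theta> \<in> {0..1}) \<and> in_MPS tb f s F}"

definition R0 :: "real \<Rightarrow> (real \<Rightarrow> real) \<Rightarrow> (real \<Rightarrow> real) \<Rightarrow> (real \<Rightarrow> real) \<Rightarrow> real" where
  "R0 tb f F s = (LINT \<theta>:{0..tb}|lborel. virt_val F f \<theta> * s \<theta> * f \<theta>)"

end

theory Submission
  imports Defs
begin

text \<open>
  For feasible s let tail z be the slack of the mean-preserving-spread constraint at z, the integral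
  of (F - s) f over [z, tb]; it is nonnegative and vanishes at 0 and tb. Since J \<le> id, J tb = tb
  and J' tb = 2, there is \<epsilon> > 0 such that on [tb - \<epsilon>, tb] the virtual value J is increasing and
  dominates all its values further left. For a maximiser s let m be the infimum of the points of
  [tb - \<epsilon>, tb] where s \<le> F, so that s \<le> F m on [0, m] and s > F on [tb - \<epsilon>, m). Raising s to F
  above m and capping it at a level L on [0, m], with L chosen to keep the mean, gives a feasible
  scheme that gains at least the integral of (J y - J m) (F y - s y) f y over [m, tb]; integration
  by parts turns this into the integral of J' \<cdot> tail, which is nonnegative. Maximality forces
  tail = 0 on [m, tb], hence s = F on (m, tb), and tail (tb - \<epsilon>) \<ge> 0 forces m = tb - \<epsilon>.
\<close>

definition bounded_measurable_on :: "real set \<Rightarrow> (real \<Rightarrow> real) \<Rightarrow> bool" where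
  "bounded_measurable_on S g \<longleftrightarrow> set_borel_measurable lborel S g \<and> bounded (g ` S)"

lemma bounded_measurable_on_set_integrable:
  assumes g: "bounded_measurable_on {a..b} g" and "a \<le> c" "d \<le> b"
  shows "set_integrable lborel {c..d} g"
proof -
  from g obtain B where B: "\<forall>x\<in>{a..b}. norm (g x) \<le> B"
    by (auto simp: bounded_measurable_on_def bounded_iff)
  have "set_integrable lborel {a..b} g"
    unfolding set_integrable_def
    by (rule integrableI_bounded_set[where A="{a..b}" and B=B])
      (use g B in \<open>auto simp: bounded_measurable_on_def set_borel_measurable_def indicator_def
        emeasure_lborel_Icc_eq\<close>)
  then show ?thesis
    by (rule set_integrable_subset) (use assms in auto)
qed

lemma bounded_measurable_on_integrable_on:
  "bounded_measurable_on {a..b} g \<Longrightarrow> a \<le> c \<Longrightarrow> d \<le> b \<Longrightarrow> g integrable_on {c..d}"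
  using bounded_measurable_on_set_integrable set_borel_integral_eq_integral(1) by blast

lemma bounded_measurable_on_set_lebesgue_integral:
  "bounded_measurable_on {a..b} g \<Longrightarrow> a \<le> c \<Longrightarrow> d \<le> b
    \<Longrightarrow> (LINT t:{c..d}|lborel. g t) = integral {c..d} g"
  using bounded_measurable_on_set_integrable set_borel_integral_eq_integral(2) by blast

lemma bounded_measurable_on_continuous:
  assumes "continuous_on {a..b} g"
  shows "bounded_measurable_on {a..b} g"
  using assms borel_measurable_continuous_on_indicator[of "{a..b}" g]
    compact_imp_bounded[OF compact_continuous_image]
  by (auto simp: bounded_measurable_on_def set_borel_measurable_def)

lemma bounded_measurable_on_const: "bounded_measurable_on {a..b} (\<lambda>t. c)"
  by (rule bounded_measurable_on_continuous) simp

lemma bounded_measurable_on_mono: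
  assumes mono: "mono_on {a..b} g"
  shows "bounded_measurable_on {a..b} g"
proof -
  have "g \<in> borel_measurable (restrict_space borel {a..b})"
    by (rule borel_measurable_mono_on_fnc) fact
  then have "set_borel_measurable lborel {a..b} g"
    unfolding set_borel_measurable_def by (subst (asm) borel_measurable_restrict_space_iff) auto
  moreover have "\<bar>g t\<bar> \<le> \<bar>g a\<bar> + \<bar>g b\<bar>" if "t \<in> {a..b}" for t
    using mono_onD[OF mono, of a t] mono_onD[OF mono, of t b] that by auto
  then have "bounded (g ` {a..b})"
    unfolding bounded_iff by (intro exI[of _ "\<bar>g a\<bar> + \<bar>g b\<bar>"]) auto
  ultimately show ?thesis
    by (simp add: bounded_measurable_on_def)
qed

lemma bounded_measurable_on_diff:
  assumes "bounded_measurable_on S g" "bounded_measurable_on S h"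
  shows "bounded_measurable_on S (\<lambda>t. g t - h t)"
  using assms bounded_minus_comp[of g S h]
  by (auto simp: bounded_measurable_on_def set_borel_measurable_def right_diff_distrib
      intro!: borel_measurable_diff)

lemma bounded_measurable_on_mult:
  assumes "bounded_measurable_on S g" "bounded_measurable_on S h"
  shows "bounded_measurable_on S (\<lambda>t. g t * h t)"
proof -
  have "(\<lambda>x. indicator S x *\<^sub>R (g x * h x)) = (\<lambda>x. (indicator S x *\<^sub>R g x) * (indicator S x *\<^sub>R h x))"
    by (auto simp: indicator_def fun_eq_iff)
  then have "set_borel_measurable lborel S (\<lambda>t. g t * h t)"
    using assms by (auto simp: bounded_measurable_on_def set_borel_measurable_def
      intro!: borel_measurable_times)
  moreover
  from assms obtain B C where "\<forall>x\<in>S. \<bar>g x\<bar> \<le> B" "\<forall>x\<in>S. \<bar>h x\<bar> \<le> C"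
    by (auto simp: bounded_measurable_on_def bounded_iff)
  then have "\<forall>x\<in>S. \<bar>g x * h x\<bar> \<le> B * C"
    by (auto simp: abs_mult intro!: mult_mono)
  then have "bounded ((\<lambda>t. g t * h t) ` S)"
    by (auto simp: bounded_iff)
  ultimately show ?thesis
    by (simp add: bounded_measurable_on_def)
qed

lemma abs_integral_le_mult_length:
  fixes g :: "real \<Rightarrow> real"
  assumes "g integrable_on {u..v}" "0 \<le> C" "\<And>t. t \<in> {u..v} \<Longrightarrow> \<bar>g t\<bar> \<le> C"
  shows "\<bar>integral {u..v} g\<bar> \<le> C * \<bar>v - u\<bar>"
proof (cases "u \<le> v")
  case True
  have "norm (integral {u..v} g) \<le> C * measure lborel {u..v}"
    by (rule has_integral_bound_real[where S="{}"]) (use assms in auto)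
  then show ?thesis
    using True by simp
qed (use assms in simp)

lemma integral_spike_point:
  fixes g h :: "real \<Rightarrow> real"
  shows "(\<And>t. t \<in> {a..b} \<Longrightarrow> t \<noteq> c \<Longrightarrow> g t = h t) \<Longrightarrow> integral {a..b} g = integral {a..b} h"
  by (rule integral_spike[of "{c}"]) auto

lemma integral_nonpos_except_right_end:
  fixes g :: "real \<Rightarrow> real"
  assumes "g integrable_on {u..v}" "\<And>t. t \<in> {u..<v} \<Longrightarrow> g t \<le> 0"
  shows "integral {u..v} g \<le> 0"
proof -
  define g0 where "g0 t = (if t = v then 0 else g t)" for t
  have "integral {u..v} g = integral {u..v} g0"
    by (rule integral_spike_point[of _ _ v]) (simp add: g0_def)
  also have "\<dots> \<le> integral {u..v} (\<lambda>t. 0)"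
    using assms integrable_spike[OF assms(1), of "{v}" g0]
    by (intro integral_le) (auto simp: g0_def)
  finally show ?thesis
    by simp
qed

lemma mono_on_threshold:
  fixes s :: "real \<Rightarrow> real"
  assumes mono: "mono_on {a..b} s" and "a \<le> b"
  obtains p where "p \<in> {a..b}" "\<And>t. t \<in> {a..<p} \<Longrightarrow> s t \<le> L" "\<And>t. t \<in> {p<..b} \<Longrightarrow> L < s t"
proof -
  define A where "A = {t \<in> {a..b}. s t \<le> L} \<union> {a}"
  have A: "A \<noteq> {}" "bdd_above A"
    using assms by (auto simp: A_def bdd_above_def)
  have "Sup A \<in> {a..b}"
    using cSup_upper[OF _ A(2), of a] cSup_least[OF A(1), of b] assms by (auto simp: A_def)
  moreover have "s t \<le> L" if t: "t \<in> {a..<Sup A}" for t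
  proof -
    obtain u where u: "u \<in> A" "t < u"
      using t less_cSup_iff[OF A] by auto
    then have "u \<in> {a..b}" "s u \<le> L"
      using t by (auto simp: A_def)
    then show ?thesis
      using mono_onD[OF mono, of t u] t u by auto
  qed
  moreover have "L < s t" if t: "t \<in> {Sup A<..b}" for t
  proof (rule ccontr)
    assume "\<not> L < s t"
    then have "t \<in> A"
      using t \<open>Sup A \<in> {a..b}\<close> by (auto simp: A_def)
    then show False
      using cSup_upper[OF _ A(2), of t] t by auto
  qed
  ultimately show thesis
    using that by blast
qed

text \<open>
  The tail of a bounded measurable \<phi> is differentiable only almost everywhere, but the moment is
  differentiable at every point, with derivative - J' \<cdot> tail; this yields the integration by parts
  formula has_integral_J'_tail.
\<close>

locale tail_moment =
  fixes a b :: real and J J' \<phi> :: "real \<Rightarrow> real"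
  assumes J_deriv: "\<And>z. z \<in> {a..b} \<Longrightarrow> (J has_real_derivative J' z) (at z within {a..b})"
    and \<phi>: "bounded_measurable_on {a..b} \<phi>"
begin

definition tail :: "real \<Rightarrow> real" where
  "tail z = integral {z..b} \<phi>"

definition moment :: "real \<Rightarrow> real" where
  "moment z = integral {z..b} (\<lambda>y. (J y - J z) * \<phi> y)"

lemma J_continuous: "continuous_on {a..b} J"
  using J_deriv DERIV_continuous continuous_on_eq_continuous_within by blast

lemma weighted_integrable:
  "a \<le> u \<Longrightarrow> v \<le> b \<Longrightarrow> (\<lambda>y. (J y - c) * \<phi> y) integrable_on {u..v}"
  by (intro bounded_measurable_on_integrable_on[of a b] bounded_measurable_on_mult
      bounded_measurable_on_diff bounded_measurable_on_continuous J_continuous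
      bounded_measurable_on_const \<phi>)

lemma moment_shift:
  assumes "u \<in> {a..b}"
  shows "integral {u..b} (\<lambda>y. (J y - c) * \<phi> y) = moment u + (J u - c) * tail u"
proof -
  have "integral {u..b} (\<lambda>y. (J y - c) * \<phi> y)
      = integral {u..b} (\<lambda>y. (J y - J u) * \<phi> y + (J u - c) * \<phi> y)"
    by (simp add: algebra_simps)
  also have "\<dots> = moment u + integral {u..b} (\<lambda>y. (J u - c) * \<phi> y)"
    unfolding moment_def using assms
    by (intro integral_add weighted_integrable bounded_measurable_on_integrable_on[of a b]
        bounded_measurable_on_mult bounded_measurable_on_const \<phi>) auto
  finally show ?thesis
    by (simp add: tail_def)
qed

lemma moment_increment:
  assumes y: "y \<in> {a..b}" and z: "z \<in> {a..b}"
  shows "moment y - moment z + (J y - J z) * tail y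
    = integral {y..z} (\<lambda>t. (J t - J z) * \<phi> t) - integral {z..y} (\<lambda>t. (J t - J z) * \<phi> t)"
proof (cases "y \<le> z")
  case True
  have "integral {y..b} (\<lambda>t. (J t - J z) * \<phi> t)
      = integral {y..z} (\<lambda>t. (J t - J z) * \<phi> t) + moment z"
    unfolding moment_def using y z True
    by (intro Henstock_Kurzweil_Integration.integral_combine[symmetric] weighted_integrable) auto
  moreover have "integral {z..y} (\<lambda>t. (J t - J z) * \<phi> t) = 0"
    using True by (cases "y = z") auto
  ultimately show ?thesis
    using moment_shift[OF y, of "J z"] by (simp add: algebra_simps)
next
  case False
  have "integral {z..b} (\<lambda>t. (J t - J z) * \<phi> t)
      = integral {z..y} (\<lambda>t. (J t - J z) * \<phi> t) + integral {y..b} (\<lambda>t. (J t - J z) * \<phi> t)"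
    using y z False by (intro Henstock_Kurzweil_Integration.integral_combine[symmetric] weighted_integrable) auto
  then show ?thesis
    using False moment_shift[OF y, of "J z"] by (simp add: moment_def algebra_simps)
qed

lemma abs_integral_weighted_le:
  assumes "a \<le> u" "v \<le> b" "0 \<le> e" "\<And>t. t \<in> {u..v} \<Longrightarrow> \<bar>J t - J z\<bar> \<le> e"
    and B: "0 \<le> B" "\<And>t. t \<in> {a..b} \<Longrightarrow> \<bar>\<phi> t\<bar> \<le> B"
  shows "\<bar>integral {u..v} (\<lambda>t. (J t - J z) * \<phi> t)\<bar> \<le> e * B * \<bar>v - u\<bar>"
proof (rule abs_integral_le_mult_length[OF weighted_integrable[OF assms(1,2)]])
  fix t assume "t \<in> {u..v}"
  then have "\<bar>J t - J z\<bar> * \<bar>\<phi> t\<bar> \<le> e * B"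
    using assms by (intro mult_mono) auto
  then show "\<bar>(J t - J z) * \<phi> t\<bar> \<le> e * B"
    by (simp add: abs_mult)
qed (use assms in simp)

lemma moment_remainder_tendsto:
  assumes z: "z \<in> {a..b}"
  shows "((\<lambda>y. (moment y - moment z + (J y - J z) * tail y) / (y - z)) \<longlongrightarrow> 0) (at z within {a..b})"
  unfolding Lim_within
proof (intro allI impI)
  fix e :: real assume "e > 0"
  obtain B where B: "B > 0" "\<And>t. t \<in> {a..b} \<Longrightarrow> \<bar>\<phi> t\<bar> \<le> B"
    using \<phi> by (auto simp: bounded_measurable_on_def bounded_pos)
  obtain d where d: "d > 0" "\<And>t. t \<in> {a..b} \<Longrightarrow> dist t z < d \<Longrightarrow> dist (J t) (J z) < e / (4 * B)"
    using J_continuous z B \<open>e > 0\<close> unfolding continuous_on_iff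
    by (metis divide_pos_pos mult_pos_pos zero_less_numeral)
  have "\<bar>(moment y - moment z + (J y - J z) * tail y) / (y - z)\<bar> < e"
    if y: "y \<in> {a..b}" "0 < dist y z" "dist y z < d" for y
  proof -
    have near: "\<bar>J t - J z\<bar> \<le> e / (4 * B)" if "t \<in> {y..z} \<union> {z..y}" for t
      using d(2)[of t] that y z by (auto simp: dist_real_def)
    have "e / (4 * B) * B = e / 4"
      using B(1) by simp
    then have "\<bar>integral {y..z} (\<lambda>t. (J t - J z) * \<phi> t)\<bar> \<le> e / 4 * \<bar>y - z\<bar>"
      "\<bar>integral {z..y} (\<lambda>t. (J t - J z) * \<phi> t)\<bar> \<le> e / 4 * \<bar>y - z\<bar>"
      using abs_integral_weighted_le[of y z "e / (4 * B)" z B] abs_integral_weighted_le[of z y "e / (4 * B)" z B]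
        near y z B \<open>e > 0\<close> by (auto simp: abs_minus_commute)
    then have "\<bar>moment y - moment z + (J y - J z) * tail y\<bar> \<le> e / 2 * \<bar>y - z\<bar>"
      unfolding moment_increment[OF y(1) z] by linarith
    then have "\<bar>(moment y - moment z + (J y - J z) * tail y) / (y - z)\<bar> \<le> e / 2"
      using y by (simp add: abs_divide divide_le_eq)
    then show ?thesis
      using \<open>e > 0\<close> by linarith
  qed
  then show "\<exists>d>0. \<forall>y\<in>{a..b}. 0 < dist y z \<and> dist y z < d \<longrightarrow>
      dist ((moment y - moment z + (J y - J z) * tail y) / (y - z)) 0 < e"
    using \<open>d > 0\<close> by auto
qed

lemma moment_has_derivative:
  assumes z: "z \<in> {a..b}"
  shows "(moment has_real_derivative - (J' z * tail z)) (at z within {a..b})"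
proof -
  have J_quotient: "((\<lambda>y. (J y - J z) / (y - z)) \<longlongrightarrow> J' z) (at z within {a..b})"
    using J_deriv[OF z] by (simp add: has_field_derivative_iff)
  have tail_cont: "(tail \<longlongrightarrow> tail z) (at z within {a..b})"
    using indefinite_integral_continuous_1'[OF bounded_measurable_on_integrable_on[OF \<phi> order_refl order_refl]] z
    by (simp add: tail_def[abs_def] continuous_on_def)
  have "((\<lambda>y. - ((J y - J z) / (y - z)) * tail y + (moment y - moment z + (J y - J z) * tail y) / (y - z))
      \<longlongrightarrow> - J' z * tail z + 0) (at z within {a..b})"
    by (intro tendsto_add tendsto_mult tendsto_minus J_quotient tail_cont moment_remainder_tendsto z)
  moreover have "(moment y - moment z) / (y - z)
      = - ((J y - J z) / (y - z)) * tail y + (moment y - moment z + (J y - J z) * tail y) / (y - z)" for y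
    by (simp add: add_divide_distrib)
  ultimately show ?thesis
    by (simp add: has_field_derivative_iff)
qed

lemma has_integral_J'_tail:
  assumes c: "c \<in> {a..b}"
  shows "((\<lambda>z. J' z * tail z) has_integral moment c) {c..b}"
proof -
  have "((\<lambda>z. - (J' z * tail z)) has_integral moment b - moment c) {c..b}"
  proof (rule fundamental_theorem_of_calculus)
    fix z assume "z \<in> {c..b}"
    then show "(moment has_vector_derivative - (J' z * tail z)) (at z within {c..b})"
      using moment_has_derivative[of z] c DERIV_subset[of moment _ z "{a..b}" "{c..b}"]
      by (auto simp: has_real_derivative_iff_has_vector_derivative[symmetric])
  qed (use c in auto)
  then have "((\<lambda>z. - (- (J' z * tail z))) has_integral - (moment b - moment c)) {c..b}"
    by (rule has_integral_neg)
  then show ?thesis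
    by (simp add: moment_def)
qed

end

locale type_distribution =
  fixes tb :: real and f F f' :: "real \<Rightarrow> real"
  assumes tb_pos: "0 < tb"
    and f_cont: "continuous_on {0..tb} f"
    and f_pos: "\<And>\<theta>. \<theta> \<in> {0..tb} \<Longrightarrow> 0 < f \<theta>"
    and F_def: "\<And>\<theta>. \<theta> \<in> {0..tb} \<Longrightarrow> F \<theta> = (LINT t:{0..\<theta>}|lborel. f t)"
    and F_tb: "F tb = 1"
    and f'_cont: "continuous_on {0..tb} f'"
    and f_deriv: "\<And>\<theta>. \<theta> \<in> {0..tb} \<Longrightarrow> (f has_real_derivative f' \<theta>) (at \<theta> within {0..tb})"
begin

lemma bounded_measurable_f: "bounded_measurable_on {0..tb} f"
  by (rule bounded_measurable_on_continuous[OF f_cont])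

lemma f_integrable: "0 \<le> a \<Longrightarrow> b \<le> tb \<Longrightarrow> f integrable_on {a..b}"
  by (rule bounded_measurable_on_integrable_on[OF bounded_measurable_f])

lemma F_eq_integral: "\<theta> \<in> {0..tb} \<Longrightarrow> F \<theta> = integral {0..\<theta>} f"
  using F_def bounded_measurable_on_set_lebesgue_integral[OF bounded_measurable_f] by auto

lemma integral_f_eq_diff: "0 \<le> a \<Longrightarrow> a \<le> b \<Longrightarrow> b \<le> tb \<Longrightarrow> integral {a..b} f = F b - F a"
  using F_eq_integral[of a] F_eq_integral[of b]
    Henstock_Kurzweil_Integration.integral_combine[of 0 a b f]
    bounded_measurable_on_integrable_on[OF bounded_measurable_f, of 0 b]
  by auto

lemma integral_f_pos:
  assumes "0 \<le> a" "a < b" "b \<le> tb"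
  shows "integral {a..b} f > 0"
proof -
  have cont: "continuous_on (cbox a b) f"
    using assms by (auto intro: continuous_on_subset[OF f_cont])
  have nonneg: "\<And>x. x \<in> cbox a b \<Longrightarrow> 0 \<le> f x"
    using assms f_pos by (fastforce simp: less_imp_le)
  have "integral (cbox a b) f \<noteq> 0"
    using integral_cbox_eq_0_iff[OF cont _ nonneg] assms f_pos[of a] by auto
  moreover have "integral {a..b} f \<ge> 0"
    using nonneg assms by (intro integral_nonneg bounded_measurable_on_integrable_on[OF bounded_measurable_f]) auto
  ultimately show ?thesis
    by auto
qed

lemma F_less: "0 \<le> a \<Longrightarrow> a < b \<Longrightarrow> b \<le> tb \<Longrightarrow> F a < F b"
  using integral_f_eq_diff[of a b] integral_f_pos[of a b] by auto

lemma F_mono: "0 \<le> a \<Longrightarrow> a \<le> b \<Longrightarrow> b \<le> tb \<Longrightarrow> F a \<le> F b"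
  using F_less[of a b] by (cases "a = b") auto

lemma F_0: "F 0 = 0"
  using F_eq_integral[of 0] tb_pos by auto

lemma F_range: "\<theta> \<in> {0..tb} \<Longrightarrow> 0 \<le> F \<theta> \<and> F \<theta> \<le> 1"
  using F_mono[of 0 \<theta>] F_mono[of \<theta> tb] F_0 F_tb by auto

lemma F_deriv: "\<theta> \<in> {0..tb} \<Longrightarrow> (F has_real_derivative f \<theta>) (at \<theta> within {0..tb})"
  using F_eq_integral
  by (intro has_field_derivative_transform_within[OF integral_has_real_derivative[OF f_cont], where d=1])
    auto

lemma F_cont: "continuous_on {0..tb} F"
  using F_deriv DERIV_continuous continuous_on_eq_continuous_within by blast

lemma bounded_measurable_F: "bounded_measurable_on {0..tb} F"
  by (rule bounded_measurable_on_continuous[OF F_cont])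

definition J :: "real \<Rightarrow> real" where
  "J = virt_val F f"

definition J' :: "real \<Rightarrow> real" where
  "J' \<theta> = 2 + (1 - F \<theta>) * f' \<theta> / (f \<theta>)\<^sup>2"

lemma J_eq: "J \<theta> = \<theta> - (1 - F \<theta>) / f \<theta>"
  by (simp add: J_def virt_val_def)

lemma J_deriv:
  assumes "\<theta> \<in> {0..tb}"
  shows "(J has_real_derivative J' \<theta>) (at \<theta> within {0..tb})"
proof -
  have f_ne: "f \<theta> \<noteq> 0"
    using f_pos[OF assms] by auto
  have "((\<lambda>\<theta>. \<theta> - (1 - F \<theta>) / f \<theta>) has_real_derivative
      (1 - ((0 - f \<theta>) * f \<theta> - (1 - F \<theta>) * f' \<theta>) / (f \<theta> * f \<theta>))) (at \<theta> within {0..tb})"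
    by (intro DERIV_diff DERIV_divide DERIV_ident DERIV_const F_deriv f_deriv assms f_ne)
  moreover have "1 - ((0 - f \<theta>) * f \<theta> - (1 - F \<theta>) * f' \<theta>) / (f \<theta> * f \<theta>) = J' \<theta>"
    using f_ne by (simp add: J'_def field_simps power2_eq_square)
  ultimately show ?thesis
    by (simp add: J_eq[abs_def])
qed

lemma J_cont: "continuous_on {0..tb} J"
  using J_deriv DERIV_continuous continuous_on_eq_continuous_within by blast

lemma J'_cont: "continuous_on {0..tb} J'"
  unfolding J'_def[abs_def] using f_pos
  by (intro continuous_intros F_cont f'_cont f_cont) fastforce

lemma bounded_measurable_J: "bounded_measurable_on {0..tb} J"
  by (rule bounded_measurable_on_continuous[OF J_cont])

lemma J_le: "\<theta> \<in> {0..tb} \<Longrightarrow> J \<theta> \<le> \<theta>"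
  using F_range[of \<theta>] f_pos[of \<theta>] by (simp add: J_eq)

lemma J_mono:
  assumes "0 \<le> a" "a \<le> b" "b \<le> tb" "\<And>z. z \<in> {a..b} \<Longrightarrow> J' z \<ge> 0"
  shows "J a \<le> J b"
proof (rule DERIV_nonneg_imp_increasing_open[OF assms(2)])
  fix x assume x: "a < x" "x < b"
  then have "(J has_real_derivative J' x) (at x)"
    using J_deriv[of x] at_within_Icc_at[of 0 x tb] assms by auto
  then show "\<exists>y. (J has_real_derivative y) (at x) \<and> 0 \<le> y"
    using assms x by auto
qed (use assms in \<open>auto intro: continuous_on_subset[OF J_cont]\<close>)

lemma J'_pos_near_top: "\<exists>\<delta>>0. \<delta> \<le> tb \<and> (\<forall>z\<in>{tb-\<delta>..tb}. J' z > 0)"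
proof -
  obtain d where d: "d > 0" "\<And>z. z \<in> {0..tb} \<Longrightarrow> dist z tb < d \<Longrightarrow> dist (J' z) (J' tb) < 1"
    using J'_cont tb_pos unfolding continuous_on_iff by (metis atLeastAtMost_iff less_imp_le order_refl zero_less_one)
  have "J' tb = 2"
    by (simp add: J'_def F_tb)
  moreover have "0 \<le> z" "dist z tb < d" if "z \<in> {tb - min (d/2) tb..tb}" for z
    using that d(1) by (auto simp: dist_real_def min_def split: if_splits)
  ultimately have "J' z > 0" if "z \<in> {tb - min (d/2) tb..tb}" for z
    using d(2)[of z] that by (auto simp: dist_real_def)
  then show ?thesis
    using d(1) tb_pos by (intro exI[of _ "min (d/2) tb"]) auto
qed

lemma virtual_value_regular_near_top:
  "\<exists>\<epsilon>>0. \<epsilon> \<le> tb \<and> (\<forall>m\<in>{tb-\<epsilon>..tb}. (\<forall>x\<in>{0..m}. J x \<le> J m) \<and> (\<forall>z\<in>{m..tb}. J' z > 0))"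
proof -
  obtain \<delta> where \<delta>: "\<delta> > 0" "\<delta> \<le> tb" "\<And>z. z \<in> {tb-\<delta>..tb} \<Longrightarrow> J' z > 0"
    using J'_pos_near_top by auto
  have "J tb = tb"
    by (simp add: J_eq F_tb)
  then obtain d where d: "d > 0" "\<And>m. m \<in> {0..tb} \<Longrightarrow> dist m tb < d \<Longrightarrow> J m > tb - \<delta>"
    using J_cont tb_pos \<delta>(1) unfolding continuous_on_iff dist_real_def
    by (metis abs_diff_less_iff atLeastAtMost_iff diff_less_eq less_imp_le order_refl)
  define \<epsilon> where "\<epsilon> = min (d/2) \<delta>"
  have "J x \<le> J m" if m: "m \<in> {tb-\<epsilon>..tb}" and x: "x \<in> {0..m}" for m x
  proof (cases "x \<le> tb - \<delta>")
    case True
    have "J m > tb - \<delta>"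
      using d(2)[of m] m d(1) \<delta>(2) by (auto simp: \<epsilon>_def dist_real_def)
    then show ?thesis
      using J_le[of x] True x m by auto
  next
    case False
    then show ?thesis
      using x m \<delta> by (intro J_mono less_imp_le[OF \<delta>(3)]) (auto simp: \<epsilon>_def)
  qed
  moreover have "J' z > 0" if "m \<in> {tb-\<epsilon>..tb}" "z \<in> {m..tb}" for m z
    using that \<delta>(3)[of z] by (auto simp: \<epsilon>_def)
  ultimately show ?thesis
    using d(1) \<delta> by (intro exI[of _ \<epsilon>]) (auto simp: \<epsilon>_def)
qed

lemma R0_eq_integral:
  assumes "bounded_measurable_on {0..tb} u"
  shows "R0 tb f F u = integral {0..tb} (\<lambda>\<theta>. J \<theta> * u \<theta> * f \<theta>)"
  unfolding R0_def J_def[symmetric] using tb_pos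
  by (intro bounded_measurable_on_set_lebesgue_integral[of 0 tb] bounded_measurable_on_mult
      bounded_measurable_J bounded_measurable_f assms) auto

end

locale feasible_allocation = type_distribution +
  fixes s :: "real \<Rightarrow> real"
  assumes s_S0: "s \<in> S0 tb f F"
begin

lemma s_mono_on: "mono_on {0..tb} s"
  using s_S0 by (simp add: S0_def)

lemma s_mono: "0 \<le> x \<Longrightarrow> x \<le> y \<Longrightarrow> y \<le> tb \<Longrightarrow> s x \<le> s y"
  using s_mono_on by (auto simp: mono_on_def)

lemma s_range: "t \<in> {0..tb} \<Longrightarrow> 0 \<le> s t \<and> s t \<le> 1"
  using s_S0 by (simp add: S0_def)

lemma bounded_measurable_s: "bounded_measurable_on {0..tb} s"
  by (rule bounded_measurable_on_mono[OF s_mono_on])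

definition \<phi> :: "real \<Rightarrow> real" where
  "\<phi> t = (F t - s t) * f t"

lemma bounded_measurable_\<phi>: "bounded_measurable_on {0..tb} \<phi>"
  unfolding \<phi>_def[abs_def]
  by (intro bounded_measurable_on_mult bounded_measurable_on_diff bounded_measurable_F
      bounded_measurable_s bounded_measurable_f)

lemma \<phi>_integrable: "0 \<le> a \<Longrightarrow> b \<le> tb \<Longrightarrow> \<phi> integrable_on {a..b}"
  by (rule bounded_measurable_on_integrable_on[OF bounded_measurable_\<phi>])

sublocale tail_moment 0 tb J J' \<phi>
  using J_deriv bounded_measurable_\<phi> by unfold_locales

lemma tail_eq_LINT_diff:
  assumes "x \<in> {0..tb}"
  shows "tail x = (LINT t:{x..tb}|lborel. F t * f t) - (LINT t:{x..tb}|lborel. s t * f t)"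
proof -
  have "bounded_measurable_on {0..tb} (\<lambda>t. F t * f t)" "bounded_measurable_on {0..tb} (\<lambda>t. s t * f t)"
    by (intro bounded_measurable_on_mult bounded_measurable_F bounded_measurable_s bounded_measurable_f)+
  then show ?thesis
    using assms unfolding tail_def \<phi>_def left_diff_distrib
    by (simp add: bounded_measurable_on_set_lebesgue_integral[of 0 tb] integral_diff
        bounded_measurable_on_integrable_on[of 0 tb])
qed

lemma tail_nonneg: "x \<in> {0..tb} \<Longrightarrow> tail x \<ge> 0"
  using s_S0 tail_eq_LINT_diff by (auto simp: S0_def in_MPS_def)

lemma tail_0: "tail 0 = 0"
  using s_S0 tail_eq_LINT_diff[of 0] tb_pos by (auto simp: S0_def in_MPS_def)

lemma tail_split: "0 \<le> a \<Longrightarrow> a \<le> b \<Longrightarrow> b \<le> tb \<Longrightarrow> tail a = integral {a..b} \<phi> + tail b"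
  unfolding tail_def by (intro Henstock_Kurzweil_Integration.integral_combine[symmetric] \<phi>_integrable) auto

lemma tail_cont: "continuous_on {0..tb} tail"
  unfolding tail_def[abs_def] by (intro indefinite_integral_continuous_1' \<phi>_integrable) auto

lemma integral_\<phi>_neg_right:
  assumes y: "y \<in> {0..<tb}" and gt: "F y < s y"
  obtains c where "y < c" "c \<le> tb" "\<And>c'. c' \<in> {y<..c} \<Longrightarrow> integral {y..c'} \<phi> < 0"
proof -
  obtain d where d: "d > 0" "\<And>t. t \<in> {0..tb} \<Longrightarrow> dist t y < d \<Longrightarrow> dist (F t) (F y) < s y - F y"
    using F_cont y gt unfolding continuous_on_iff by (metis atLeastLessThan_iff atLeastAtMost_iff
        diff_gt_0_iff_gt less_imp_le)
  define c where "c = min (y + d/2) tb"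
  have neg: "integral {y..c'} \<phi> < 0" if c': "c' \<in> {y<..c}" for c'
  proof -
    have c'_range: "0 \<le> y" "0 \<le> c'" "c' \<le> tb" "dist c' y < d"
      using c' y d(1) by (auto simp: c_def dist_real_def)
    then have "F c' < s y"
      using d(2)[of c'] by (auto simp: dist_real_def)
    have "integral {y..c'} \<phi> \<le> integral {y..c'} (\<lambda>t. (F c' - s y) * f t)"
    proof (rule integral_le)
      fix t assume t: "t \<in> {y..c'}"
      have "F t \<le> F c'" "s y \<le> s t" "f t > 0"
        using t c'_range by (auto intro: F_mono s_mono f_pos)
      then show "\<phi> t \<le> (F c' - s y) * f t"
        unfolding \<phi>_def by (intro mult_right_mono) auto
    qed (use c'_range integrable_on_cmult_left[OF f_integrable[of y c'], of "F c' - s y"]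
        in \<open>auto intro: \<phi>_integrable\<close>)
    also have "\<dots> = (F c' - s y) * integral {y..c'} f"
      by simp
    also have "\<dots> < 0"
      using \<open>F c' < s y\<close> integral_f_pos[of y c'] c' c'_range by (intro mult_neg_pos) auto
    finally show ?thesis .
  qed
  have "y < c" "c \<le> tb"
    using y d(1) by (auto simp: c_def)
  then show thesis
    using neg by (rule that)
qed

lemma integral_\<phi>_pos_left:
  assumes y: "y \<in> {0<..tb}" and lt: "s y < F y"
  obtains c where "c < y" "0 \<le> c" "\<And>c'. c' \<in> {c..<y} \<Longrightarrow> integral {c'..y} \<phi> > 0"
proof -
  obtain d where d: "d > 0" "\<And>t. t \<in> {0..tb} \<Longrightarrow> dist t y < d \<Longrightarrow> dist (F t) (F y) < F y - s y"
    using F_cont y lt unfolding continuous_on_iff by (metis greaterThanAtMost_iff atLeastAtMost_iff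
        diff_gt_0_iff_gt less_imp_le)
  define c where "c = max (y - d/2) 0"
  have pos: "integral {c'..y} \<phi> > 0" if c': "c' \<in> {c..<y}" for c'
  proof -
    have c'_range: "0 \<le> c'" "y \<le> tb" "dist c' y < d"
      using c' y d(1) by (auto simp: c_def dist_real_def)
    then have "s y < F c'"
      using d(2)[of c'] c' by (auto simp: dist_real_def)
    then have "0 < (F c' - s y) * integral {c'..y} f"
      using integral_f_pos[of c' y] c' c'_range by (intro mult_pos_pos) auto
    also have "\<dots> = integral {c'..y} (\<lambda>t. (F c' - s y) * f t)"
      by simp
    also have "\<dots> \<le> integral {c'..y} \<phi>"
    proof (rule integral_le)
      fix t assume t: "t \<in> {c'..y}"
      have "F c' \<le> F t" "s t \<le> s y" "f t > 0"
        using t c'_range by (auto intro: F_mono s_mono f_pos)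
      then show "(F c' - s y) * f t \<le> \<phi> t"
        unfolding \<phi>_def by (intro mult_right_mono) auto
    qed (use c'_range integrable_on_cmult_left[OF f_integrable[of c' y], of "F c' - s y"]
        in \<open>auto intro: \<phi>_integrable\<close>)
    finally show ?thesis .
  qed
  have "c < y" "0 \<le> c"
    using y d(1) by (auto simp: c_def)
  then show thesis
    using pos by (rule that)
qed

lemma eq_F_if_tail_vanishes:
  assumes a: "0 \<le> a" and vanish: "\<And>z. z \<in> {a..tb} \<Longrightarrow> tail z = 0" and y: "y \<in> {a<..<tb}"
  shows "s y = F y"
proof (rule ccontr)
  assume "s y \<noteq> F y"
  then consider "F y < s y" | "s y < F y"
    by linarith
  then show False
  proof cases
    case 1
    obtain c where c: "y < c" "c \<le> tb" "\<And>c'. c' \<in> {y<..c} \<Longrightarrow> integral {y..c'} \<phi> < 0"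
      by (rule integral_\<phi>_neg_right[of y]) (use 1 a y in auto)
    have "tail y = integral {y..c} \<phi> + tail c"
      using tail_split[of y c] c a y by auto
    moreover have "tail y = 0" "tail c = 0"
      using vanish c a y by auto
    ultimately show False
      using c(3)[of c] c(1) by simp
  next
    case 2
    obtain c where c: "c < y" "0 \<le> c" "\<And>c'. c' \<in> {c..<y} \<Longrightarrow> integral {c'..y} \<phi> > 0"
      by (rule integral_\<phi>_pos_left[of y]) (use 2 a y in auto)
    define c' where "c' = max c a"
    have c': "c' \<in> {c..<y}" "0 \<le> c'"
      using c a y by (auto simp: c'_def)
    have "tail c' = integral {c'..y} \<phi> + tail y"
      using tail_split[of c' y] c' y by auto
    moreover have "tail c' = 0" "tail y = 0"
      using vanish c' a y by (auto simp: c'_def)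
    ultimately show False
      using c(3)[OF c'(1)] by simp
  qed
qed

lemma tail_vanishes_if_moment_nonpos:
  assumes m: "m \<in> {0..tb}" and nonpos: "moment m \<le> 0" and J'_pos: "\<And>z. z \<in> {m..tb} \<Longrightarrow> J' z > 0"
    and z: "z \<in> {m..tb}"
  shows "tail z = 0"
proof (cases "m = tb")
  case True
  then show ?thesis
    using z by (simp add: tail_def)
next
  case False
  have integral: "((\<lambda>z. J' z * tail z) has_integral moment m) {m..tb}"
    by (rule has_integral_J'_tail[OF m])
  have nonneg: "0 \<le> J' x * tail x" if "x \<in> {m..tb}" for x
    using J'_pos[OF that] tail_nonneg[of x] that m by auto
  have "moment m = 0"
    using has_integral_nonneg[OF integral nonneg] nonpos by linarith
  then have integral0: "((\<lambda>z. J' z * tail z) has_integral 0) (cbox m tb)"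
    using integral by simp
  have "continuous_on (cbox m tb) (\<lambda>z. J' z * tail z)"
    using m by (auto intro!: continuous_on_mult continuous_on_subset[OF J'_cont]
        continuous_on_subset[OF tail_cont])
  then have "J' z * tail z = 0"
    by (rule has_integral_0_cbox_imp_0[OF _ _ integral0])
      (use nonneg z m False in \<open>auto simp: box_real\<close>)
  then show ?thesis
    using J'_pos[OF z] by simp
qed

lemma s_le_F_if_approached_from_right:
  assumes x: "x \<in> {0..tb}" and approach: "\<And>d. d > 0 \<Longrightarrow> \<exists>u\<in>{x..tb}. u < x + d \<and> s u \<le> F u"
  shows "s x \<le> F x"
proof (rule ccontr)
  assume "\<not> s x \<le> F x"
  then have "s x - F x > 0"
    by simp
  moreover have "\<forall>e>0. \<exists>d>0. \<forall>t\<in>{0..tb}. dist t x < d \<longrightarrow> dist (F t) (F x) < e"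
    using F_cont x unfolding continuous_on_iff by blast
  ultimately obtain d where d: "d > 0"
    "\<And>t. t \<in> {0..tb} \<Longrightarrow> dist t x < d \<Longrightarrow> dist (F t) (F x) < s x - F x"
    by blast
  obtain u where u: "u \<in> {x..tb}" "u < x + d" "s u \<le> F u"
    using approach[OF d(1)] by blast
  have "F u < s x"
    using d(2)[of u] u x by (simp add: dist_real_def abs_less_iff)
  moreover have "s x \<le> s u"
    using x u by (intro s_mono) auto
  ultimately show False
    using u(3) by simp
qed

lemma top_separation:
  assumes a: "a \<in> {0..tb}"
  obtains m where "m \<in> {a..tb}" "\<And>x. x \<in> {0..m} \<Longrightarrow> s x \<le> F m" "\<And>t. t \<in> {a..<m} \<Longrightarrow> F t < s t"
proof -
  define A where "A = {x \<in> {a..tb}. s x \<le> F x}"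
  have "tb \<in> A"
    using s_range[of tb] F_tb a by (auto simp: A_def)
  then have A: "A \<noteq> {}" "bdd_below A"
    by (auto simp: A_def bdd_below_def)
  have m_range: "Inf A \<in> {a..tb}"
    using cInf_greatest[OF A(1), of a] cInf_lower[OF \<open>tb \<in> A\<close> A(2)] by (auto simp: A_def)
  have below: "F t < s t" if t: "t \<in> {a..<Inf A}" for t
  proof -
    have "t \<notin> A"
      using t cInf_lower[OF _ A(2), of t] by auto
    then show ?thesis
      using t m_range by (auto simp: A_def)
  qed
  have "s (Inf A) \<le> F (Inf A)"
  proof (rule s_le_F_if_approached_from_right)
    fix d :: real assume "d > 0"
    then obtain u where "u \<in> A" "u < Inf A + d"
      using cInf_less_iff[OF A, of "Inf A + d"] by auto
    then show "\<exists>u\<in>{Inf A..tb}. u < Inf A + d \<and> s u \<le> F u"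
      using cInf_lower[OF _ A(2), of u] by (auto simp: A_def)
  qed (use m_range a in auto)
  then have "s x \<le> F (Inf A)" if "x \<in> {0..Inf A}" for x
    using s_mono[of x "Inf A"] that m_range a by simp
  then show thesis
    by (rule that[OF m_range _ below])
qed

lemma separation_point_at_bottom:
  assumes a: "a \<in> {0..tb}" and m: "m \<in> {a..tb}" and below: "\<And>t. t \<in> {a..<m} \<Longrightarrow> F t < s t"
    and vanish: "tail m = 0"
  shows "m = a"
proof (rule ccontr)
  assume "m \<noteq> a"
  then have "a < m"
    using m by auto
  obtain c where c: "a < c" "\<And>c'. c' \<in> {a<..c} \<Longrightarrow> integral {a..c'} \<phi> < 0"
    by (rule integral_\<phi>_neg_right[of a]) (use below[of a] a m \<open>a < m\<close> in auto)
  define c' where "c' = min c m"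
  have c': "a < c'" "c' \<le> m"
    using c \<open>a < m\<close> by (auto simp: c'_def)
  have "integral {c'..m} \<phi> \<le> 0"
  proof (rule integral_nonpos_except_right_end)
    fix t assume "t \<in> {c'..<m}"
    then show "\<phi> t \<le> 0"
      using below[of t] f_pos[of t] c' a m by (auto simp: \<phi>_def mult_nonpos_nonneg less_imp_le)
  qed (use c' a m in \<open>auto intro: \<phi>_integrable\<close>)
  moreover have "tail a = integral {a..c'} \<phi> + integral {c'..m} \<phi> + tail m"
    using tail_split[of a c'] tail_split[of c' m] c' a m by auto
  moreover have "integral {a..c'} \<phi> < 0"
    using c c' by (intro c(2)) (auto simp: c'_def)
  ultimately show False
    using tail_nonneg[OF a] vanish by linarith
qed

end

locale flattening = feasible_allocation +
  fixes m :: real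
  assumes m_range: "m \<in> {0..tb}"
    and s_le_F_m: "\<And>x. x \<in> {0..m} \<Longrightarrow> s x \<le> F m"
begin

definition excess :: "real \<Rightarrow> real" where
  "excess L = integral {0..m} (\<lambda>t. max (s t - L) 0 * f t)"

lemma bounded_measurable_positive_part: "bounded_measurable_on {0..tb} (\<lambda>t. max (s t - L) 0)"
  using s_mono by (intro bounded_measurable_on_mono mono_onI max.mono) auto

lemma excess_integrable: "(\<lambda>t. max (s t - L) 0 * f t) integrable_on {0..m}"
  using m_range by (intro bounded_measurable_on_integrable_on[of 0 tb] bounded_measurable_on_mult
      bounded_measurable_positive_part bounded_measurable_f) auto

lemma excess_diff_le: "excess a - excess b \<le> \<bar>a - b\<bar> * integral {0..m} f"
proof -
  have "excess a - excess b = integral {0..m} (\<lambda>t. max (s t - a) 0 * f t - max (s t - b) 0 * f t)"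
    unfolding excess_def by (rule integral_diff[OF excess_integrable excess_integrable, symmetric])
  also have "\<dots> \<le> integral {0..m} (\<lambda>t. \<bar>a - b\<bar> * f t)"
  proof (rule integral_le)
    fix t assume "t \<in> {0..m}"
    then have "f t > 0"
      using m_range f_pos by auto
    moreover have "max (s t - a) 0 - max (s t - b) 0 \<le> \<bar>a - b\<bar>"
      by auto
    ultimately show "max (s t - a) 0 * f t - max (s t - b) 0 * f t \<le> \<bar>a - b\<bar> * f t"
      by (metis left_diff_distrib mult_right_mono less_imp_le)
  qed (use m_range integrable_on_cmult_left[OF f_integrable[of 0 m], of "\<bar>a - b\<bar>"]
      in \<open>auto intro: integrable_diff excess_integrable\<close>)
  finally show ?thesis
    by simp
qed

lemma excess_continuous: "continuous_on UNIV excess"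
proof (rule lipschitz_on_continuous_on)
  show "(integral {0..m} f)-lipschitz_on UNIV excess"
  proof (rule lipschitz_onI)
    fix a b :: real
    show "dist (excess a) (excess b) \<le> integral {0..m} f * dist a b"
      using excess_diff_le[of a b] excess_diff_le[of b a]
      by (auto simp: dist_real_def abs_le_iff abs_minus_commute mult.commute)
  qed (use integral_f_eq_diff[of 0 m] F_mono[of 0 m] m_range in auto)
qed

lemma excess_F_m: "excess (F m) = 0"
proof -
  have "excess (F m) = integral {0..m} (\<lambda>t. 0)"
    unfolding excess_def by (rule integral_cong) (use s_le_F_m in auto)
  then show ?thesis
    by simp
qed

lemma tail_m_le_excess_0: "tail m \<le> excess 0"
proof -
  have "excess 0 = integral {0..m} (\<lambda>t. s t * f t)"
    unfolding excess_def by (rule integral_cong) (use s_range m_range in auto)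
  moreover have "integral {0..m} \<phi> = integral {0..m} (\<lambda>t. F t * f t) - integral {0..m} (\<lambda>t. s t * f t)"
    unfolding \<phi>_def left_diff_distrib using m_range
    by (intro integral_diff bounded_measurable_on_integrable_on[of 0 tb] bounded_measurable_on_mult
        bounded_measurable_F bounded_measurable_s bounded_measurable_f) auto
  moreover have "integral {0..m} (\<lambda>t. F t * f t) \<ge> 0"
    using m_range F_range f_pos
    by (intro integral_nonneg bounded_measurable_on_integrable_on[of 0 tb] bounded_measurable_on_mult
        bounded_measurable_F bounded_measurable_f) (auto simp: less_imp_le)
  moreover have "integral {0..m} \<phi> = - tail m"
    using tail_split[of 0 m] tail_0 m_range by auto
  ultimately show ?thesis
    by linarith
qed

lemma level_exists: "\<exists>L. 0 \<le> L \<and> L \<le> F m \<and> excess L = tail m"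
  using IVT2'[of excess "F m" "tail m" 0] excess_F_m tail_m_le_excess_0 tail_nonneg[of m] m_range
    F_range[of m] continuous_on_subset[OF excess_continuous]
  by auto

end

text \<open>
  Capping s at L on [0, m] removes the mass excess L, raising s to F on (m, tb] adds the mass tail m;
  the choice of L balances the two.
\<close>

locale flattened = flattening +
  fixes L :: real
  assumes L_nonneg: "0 \<le> L" and L_le_F_m: "L \<le> F m" and excess_L: "excess L = tail m"
begin

definition flat :: "real \<Rightarrow> real" where
  "flat x = (if x \<le> m then min (s x) L else F x)"

lemma flat_mono_on: "mono_on {0..tb} flat"
proof (rule mono_onI)
  fix x y assume xy: "x \<in> {0..tb}" "y \<in> {0..tb}" "x \<le> y"
  then have "s x \<le> s y" "F x \<le> F y"
    by (auto intro: s_mono F_mono)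
  moreover have "F m \<le> F y" if "m \<le> y"
    using that xy m_range by (intro F_mono) auto
  ultimately show "flat x \<le> flat y"
    using xy L_le_F_m by (auto simp: flat_def min_def)
qed

lemma flat_range: "t \<in> {0..tb} \<Longrightarrow> 0 \<le> flat t \<and> flat t \<le> 1"
  using s_range[of t] F_range[of t] L_nonneg by (auto simp: flat_def min_def)

lemma bounded_measurable_flat: "bounded_measurable_on {0..tb} flat"
  by (rule bounded_measurable_on_mono[OF flat_mono_on])

definition \<psi> :: "real \<Rightarrow> real" where
  "\<psi> t = (F t - min (s t) L) * f t"

lemma \<psi>_eq: "\<psi> t = \<phi> t + max (s t - L) 0 * f t"
  unfolding \<psi>_def \<phi>_def by (auto simp: min_def max_def algebra_simps)

lemma \<psi>_integrable: "0 \<le> a \<Longrightarrow> b \<le> tb \<Longrightarrow> \<psi> integrable_on {a..b}"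
proof -
  have "mono_on {0..tb} (\<lambda>t. min (s t) L)"
    using s_mono by (auto intro!: mono_onI min.mono)
  then show "0 \<le> a \<Longrightarrow> b \<le> tb \<Longrightarrow> ?thesis"
    unfolding \<psi>_def[abs_def]
    by (intro bounded_measurable_on_integrable_on[of 0 tb] bounded_measurable_on_mult
        bounded_measurable_on_diff bounded_measurable_on_mono bounded_measurable_F bounded_measurable_f)
qed

lemma integral_\<psi>_total: "integral {0..m} \<psi> = 0"
proof -
  have "integral {0..m} \<psi> = integral {0..m} \<phi> + excess L"
    unfolding \<psi>_eq[abs_def] excess_def using m_range
    by (intro integral_add \<phi>_integrable excess_integrable) auto
  then show ?thesis
    using tail_split[of 0 m] tail_0 m_range excess_L by auto
qed

lemma integral_\<psi>_nonpos_above_threshold: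
  assumes "0 \<le> p" "p \<le> x" "x \<le> m" "F x < L" and above: "\<And>t. t \<in> {p<..x} \<Longrightarrow> L < s t"
  shows "integral {p..x} \<psi> \<le> 0"
proof -
  have "integral {p..x} \<psi> = integral {p..x} (\<lambda>t. (F t - L) * f t)"
  proof (rule integral_spike_point[of _ _ p])
    fix t assume "t \<in> {p..x}" "t \<noteq> p"
    then have "L < s t"
      using above by auto
    then show "\<psi> t = (F t - L) * f t"
      by (simp add: \<psi>_def min_def)
  qed
  also have "\<dots> \<le> 0"
  proof (rule integral_nonpos_except_right_end)
    fix t assume "t \<in> {p..<x}"
    then have "F t \<le> F x" "f t > 0"
      using assms m_range by (auto intro: F_mono f_pos)
    then show "(F t - L) * f t \<le> 0"
      using assms by (simp add: mult_nonpos_nonneg)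
  qed (use assms m_range in \<open>auto intro!: bounded_measurable_on_integrable_on[of 0 tb]
      bounded_measurable_on_mult bounded_measurable_on_diff bounded_measurable_on_const
      bounded_measurable_F bounded_measurable_f\<close>)
  finally show ?thesis .
qed

lemma integral_\<psi>_tail_nonneg:
  assumes x: "x \<in> {0..m}"
  shows "integral {x..m} \<psi> \<ge> 0"
proof (cases "L \<le> F x")
  case True
  show ?thesis
  proof (rule integral_nonneg)
    fix t assume t: "t \<in> {x..m}"
    then have "F x \<le> F t" "f t > 0"
      using x m_range by (auto intro: F_mono f_pos)
    then show "0 \<le> \<psi> t"
      using True by (auto simp: \<psi>_def min_def)
  qed (use x m_range in \<open>auto intro: \<psi>_integrable\<close>)
next
  case False
  have "mono_on {0..x} s"
    using s_mono x m_range by (auto intro: mono_onI)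
  then obtain p where p: "p \<in> {0..x}" "\<And>t. t \<in> {0..<p} \<Longrightarrow> s t \<le> L" "\<And>t. t \<in> {p<..x} \<Longrightarrow> L < s t"
    using mono_on_threshold[of 0 x s L] x by auto
  have "integral {0..m} \<psi> = integral {0..p} \<psi> + integral {p..x} \<psi> + integral {x..m} \<psi>"
    using p x m_range Henstock_Kurzweil_Integration.integral_combine[of 0 p m \<psi>]
      Henstock_Kurzweil_Integration.integral_combine[of p x m \<psi>] \<psi>_integrable[of 0 m] \<psi>_integrable[of p m]
    by auto
  moreover have "integral {0..p} \<psi> = integral {0..p} \<phi>"
    by (rule integral_spike_point[of _ _ p]) (use p(2) in \<open>auto simp: \<psi>_def \<phi>_def min_def\<close>)
  moreover have "integral {0..p} \<phi> = - tail p" "tail p \<ge> 0"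
    using tail_split[of 0 p] tail_0 tail_nonneg[of p] p x m_range by auto
  moreover have "integral {p..x} \<psi> \<le> 0"
    using integral_\<psi>_nonpos_above_threshold[OF _ _ _ _ p(3)] False p x by auto
  ultimately show ?thesis
    using integral_\<psi>_total by linarith
qed

lemma flat_tail:
  assumes x: "x \<in> {0..tb}"
  shows "integral {x..tb} (\<lambda>t. (F t - flat t) * f t) = (if x \<le> m then integral {x..m} \<psi> else 0)"
proof (cases "x \<le> m")
  case True
  have "integral {x..tb} (\<lambda>t. (F t - flat t) * f t)
      = integral {x..m} (\<lambda>t. (F t - flat t) * f t) + integral {m..tb} (\<lambda>t. (F t - flat t) * f t)"
    using True x m_range
    by (intro Henstock_Kurzweil_Integration.integral_combine[symmetric] bounded_measurable_on_integrable_on[of 0 tb]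
        bounded_measurable_on_mult bounded_measurable_on_diff bounded_measurable_F bounded_measurable_flat
        bounded_measurable_f) auto
  moreover have "integral {x..m} (\<lambda>t. (F t - flat t) * f t) = integral {x..m} \<psi>"
    by (rule integral_cong) (auto simp: \<psi>_def flat_def)
  moreover have "integral {m..tb} (\<lambda>t. (F t - flat t) * f t) = integral {m..tb} (\<lambda>t. 0)"
    by (rule integral_spike_point[of _ _ m]) (auto simp: flat_def)
  ultimately show ?thesis
    using True by simp
next
  case False
  have "integral {x..tb} (\<lambda>t. (F t - flat t) * f t) = integral {x..tb} (\<lambda>t. 0)"
    by (rule integral_cong) (use False in \<open>auto simp: flat_def\<close>)
  then show ?thesis
    using False by simp
qed

lemma flat_S0: "flat \<in> S0 tb f F"
proof -
  have bm: "bounded_measurable_on {0..tb} (\<lambda>t. flat t * f t)" "bounded_measurable_on {0..tb} (\<lambda>t. F t * f t)"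
    by (intro bounded_measurable_on_mult bounded_measurable_flat bounded_measurable_F bounded_measurable_f)+
  have diff: "(LINT t:{x..tb}|lborel. F t * f t) - (LINT t:{x..tb}|lborel. flat t * f t)
      = integral {x..tb} (\<lambda>t. (F t - flat t) * f t)" if "x \<in> {0..tb}" for x
    using that unfolding left_diff_distrib
    by (simp add: bounded_measurable_on_set_lebesgue_integral[of 0 tb] bm
        integral_diff bounded_measurable_on_integrable_on[of 0 tb])
  have "integral {x..tb} (\<lambda>t. (F t - flat t) * f t) \<ge> 0" if "x \<in> {0..tb}" for x
    using flat_tail[OF that] integral_\<psi>_tail_nonneg[of x] that by auto
  moreover have "integral {0..tb} (\<lambda>t. (F t - flat t) * f t) = 0"
    using flat_tail[of 0] integral_\<psi>_total m_range by auto
  ultimately show ?thesis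
    using flat_mono_on flat_range bounded_measurable_flat bounded_measurable_F diff[of 0] diff tb_pos
    by (fastforce simp: S0_def in_MPS_def bounded_measurable_on_def)
qed

lemma R0_flat_diff:
  "R0 tb f F flat - R0 tb f F s
    = integral {m..tb} (\<lambda>t. J t * \<phi> t) - integral {0..m} (\<lambda>t. J t * (max (s t - L) 0 * f t))"
proof -
  define k where "k t = J t * (flat t - s t) * f t" for t
  have k_integrable: "k integrable_on {a..b}" if "0 \<le> a" "b \<le> tb" for a b
    unfolding k_def[abs_def] using that
    by (intro bounded_measurable_on_integrable_on[of 0 tb] bounded_measurable_on_mult
        bounded_measurable_on_diff bounded_measurable_J bounded_measurable_flat bounded_measurable_s
        bounded_measurable_f)
  have "R0 tb f F flat - R0 tb f F s = integral {0..tb} k"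
    unfolding R0_eq_integral[OF bounded_measurable_flat] R0_eq_integral[OF bounded_measurable_s] k_def
    by (subst integral_diff[symmetric]; (intro bounded_measurable_on_integrable_on[of 0 tb]
        bounded_measurable_on_mult bounded_measurable_J bounded_measurable_flat bounded_measurable_s
        bounded_measurable_f order_refl)?) (simp add: algebra_simps)
  also have "\<dots> = integral {0..m} k + integral {m..tb} k"
    using m_range k_integrable by (intro Henstock_Kurzweil_Integration.integral_combine[symmetric]) auto
  also have "integral {0..m} k = - integral {0..m} (\<lambda>t. J t * (max (s t - L) 0 * f t))"
    by (subst integral_neg[symmetric]) (rule integral_cong, auto simp: k_def flat_def min_def max_def algebra_simps)
  also have "integral {m..tb} k = integral {m..tb} (\<lambda>t. J t * \<phi> t)"
    by (rule integral_spike_point[of _ _ m]) (auto simp: k_def flat_def \<phi>_def)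
  finally show ?thesis
    by simp
qed

lemma R0_flat_gain:
  assumes J_le_J_m: "\<And>x. x \<in> {0..m} \<Longrightarrow> J x \<le> J m"
  shows "R0 tb f F flat - R0 tb f F s \<ge> moment m"
proof -
  have "integral {0..m} (\<lambda>t. J t * (max (s t - L) 0 * f t)) \<le> integral {0..m} (\<lambda>t. J m * (max (s t - L) 0 * f t))"
  proof (rule integral_le)
    fix t assume t: "t \<in> {0..m}"
    have "max (s t - L) 0 * f t \<ge> 0"
      using t m_range f_pos[of t] by auto
    then show "J t * (max (s t - L) 0 * f t) \<le> J m * (max (s t - L) 0 * f t)"
      using J_le_J_m[OF t] by (rule mult_right_mono[rotated])
  qed (use m_range in \<open>auto intro!: bounded_measurable_on_integrable_on[of 0 tb] bounded_measurable_on_mult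
      bounded_measurable_J bounded_measurable_on_const bounded_measurable_positive_part bounded_measurable_f\<close>)
  also have "\<dots> = J m * tail m"
    using excess_L by (simp add: excess_def)
  finally have "integral {0..m} (\<lambda>t. J t * (max (s t - L) 0 * f t)) \<le> J m * tail m" .
  moreover have "integral {m..tb} (\<lambda>t. J t * \<phi> t) = moment m + J m * tail m"
    using moment_shift[of m 0] m_range by (simp add: moment_def)
  ultimately show ?thesis
    using R0_flat_diff by linarith
qed

end

context feasible_allocation
begin

lemma maximizer_eq_F_above:
  assumes maximal: "\<forall>s'\<in>S0 tb f F. R0 tb f F s' \<le> R0 tb f F s"
    and a: "a \<in> {0..tb}"
    and regular: "\<And>m. m \<in> {a..tb} \<Longrightarrow> (\<forall>x\<in>{0..m}. J x \<le> J m) \<and> (\<forall>z\<in>{m..tb}. J' z > 0)"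
    and y: "y \<in> {a<..<tb}"
  shows "s y = F y"
proof -
  obtain m where m: "m \<in> {a..tb}" "\<And>x. x \<in> {0..m} \<Longrightarrow> s x \<le> F m" "\<And>t. t \<in> {a..<m} \<Longrightarrow> F t < s t"
    using top_separation[OF a] by blast
  interpret flattening tb f F f' s m
    using m a by unfold_locales auto
  obtain L where "0 \<le> L" "L \<le> F m" "excess L = tail m"
    using level_exists by blast
  then interpret flattened tb f F f' s m L
    by unfold_locales
  have "moment m \<le> 0"
    using R0_flat_gain regular[OF m(1)] maximal flat_S0 by fastforce
  then have vanish: "\<And>z. z \<in> {m..tb} \<Longrightarrow> tail z = 0"
    using tail_vanishes_if_moment_nonpos m_range regular[OF m(1)] by blast
  then have "m = a"
    using separation_point_at_bottom[OF a m(1) m(3)] m(1) by simp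
  then show ?thesis
    using eq_F_if_tail_vanishes[of a] vanish a y by auto
qed

end

theorem mainTheorem12:
  fixes tb :: real and f F f' :: "real \<Rightarrow> real"
  assumes tb_pos: "0 < tb"
    and f_cont: "continuous_on {0..tb} f"
    and f_pos: "\<And>\<theta>. \<theta> \<in> {0..tb} \<Longrightarrow> 0 < f \<theta>"
    and F_def: "\<And>\<theta>. \<theta> \<in> {0..tb} \<Longrightarrow> F \<theta> = (LINT t:{0..\<theta>}|lborel. f t)"
    and F_tb: "F tb = 1"
    and f_C1: "continuous_on {0..tb} f'"
    and f_deriv: "\<And>\<theta>. \<theta> \<in> {0..tb} \<Longrightarrow> (f has_real_derivative f' \<theta>) (at \<theta> within {0..tb})"
  shows "\<exists>\<epsilon>>0. \<epsilon> \<le> tb \<and>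
           (\<forall>s\<in>S0 tb f F. (\<forall>s'\<in>S0 tb f F. R0 tb f F s' \<le> R0 tb f F s) \<longrightarrow>
              (AE \<theta> in lborel. \<theta> \<in> {tb - \<epsilon>..tb} \<longrightarrow> s \<theta> = F \<theta>))"
proof -
  interpret type_distribution tb f F f'
    using assms by unfold_locales
  obtain \<epsilon> where \<epsilon>: "\<epsilon> > 0" "\<epsilon> \<le> tb"
    "\<forall>m\<in>{tb-\<epsilon>..tb}. (\<forall>x\<in>{0..m}. J x \<le> J m) \<and> (\<forall>z\<in>{m..tb}. J' z > 0)"
    using virtual_value_regular_near_top by blast
  have "AE \<theta> in lborel. \<theta> \<in> {tb - \<epsilon>..tb} \<longrightarrow> s \<theta> = F \<theta>"
    if s: "s \<in> S0 tb f F" and maximal: "\<forall>s'\<in>S0 tb f F. R0 tb f F s' \<le> R0 tb f F s" for s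
  proof -
    interpret feasible_allocation tb f F f' s
      using s by unfold_locales
    have eq: "s \<theta> = F \<theta>" if "\<theta> \<in> {tb - \<epsilon><..<tb}" for \<theta>
      using maximizer_eq_F_above[OF maximal _ _ that] \<epsilon> by auto
    show ?thesis
      using AE_lborel_singleton[of "tb - \<epsilon>"] AE_lborel_singleton[of tb]
      by eventually_elim (use eq in auto)
  qed
  then show ?thesis
    using \<epsilon> by blast
qed

end
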